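(* If $T\in\mathcal{T}_3$ has $n$ vertices then $\mu(T)<\frac{3n-2}{4}$.
   Context: A leaf is a vertex of degree at most 1; an internal vertex has degree at least 2. $\mathcal{T}_3$ is the set of finite trees with at least one internal vertex in which every internal vertex has degree at least 3. A subtree of $T$ is a nonempty vertex set inducing a connected subgraph; $\mu(T)$ is the average number of vertices over all subtrees of $T$. *)

theory Defs
  imports Main Complex_Main
begin

definition simple_graph :: "'a set \<Rightarrow> ('a \<Rightarrow> 'a \<Rightarrow> bool) \<Rightarrow> bool" where
  "simple_graph V E \<longleftrightarrow> finite V \<and> (\<forall>u v. E u v \<longrightarrow> u \<in> V \<and> v \<in> V \<and> u \<noteq> v \<and> E v u)"

definition edges :: "'a set \<Rightarrow> ('a \<Rightarrow> 'a \<Rightarrow> bool) \<Rightarrow> 'a set set" where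
  "edges V E = {{u, v} | u v. u \<in> V \<and> v \<in> V \<and> E u v}"

definition degree :: "'a set \<Rightarrow> ('a \<Rightarrow> 'a \<Rightarrow> bool) \<Rightarrow> 'a \<Rightarrow> nat" where
  "degree V E v = card {u \<in> V. E v u}"

definition induces_connected :: "('a \<Rightarrow> 'a \<Rightarrow> bool) \<Rightarrow> 'a set \<Rightarrow> bool" where
  "induces_connected E S \<longleftrightarrow> S \<noteq> {} \<and>
     (\<forall>x\<in>S. \<forall>y\<in>S. (x, y) \<in> {(u, v). u \<in> S \<and> v \<in> S \<and> E u v}\<^sup>*)"

definition is_tree :: "'a set \<Rightarrow> ('a \<Rightarrow> 'a \<Rightarrow> bool) \<Rightarrow> bool" where
  "is_tree V E \<longleftrightarrow> simple_graph V E \<and> induces_connected E V \<and> card (edges V E) + 1 = card V"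

definition in_T3 :: "'a set \<Rightarrow> ('a \<Rightarrow> 'a \<Rightarrow> bool) \<Rightarrow> bool" where
  "in_T3 V E \<longleftrightarrow> is_tree V E \<and> (\<exists>v\<in>V. degree V E v \<ge> 2) \<and>
     (\<forall>v\<in>V. degree V E v \<ge> 2 \<longrightarrow> degree V E v \<ge> 3)"

definition subtrees :: "'a set \<Rightarrow> ('a \<Rightarrow> 'a \<Rightarrow> bool) \<Rightarrow> 'a set set" where
  "subtrees V E = {S. S \<subseteq> V \<and> induces_connected E S}"

definition mu :: "'a set \<Rightarrow> ('a \<Rightarrow> 'a \<Rightarrow> bool) \<Rightarrow> real" where
  "mu V E = (\<Sum>S\<in>subtrees V E. real (card S)) / real (card (subtrees V E))"

end

theory Submission imports Defs begin

text \<open>Split the subtrees into those meeting the set \<open>I\<close> of internal vertices and the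
  single leaves. Since no two leaves are adjacent, a subtree \<open>S\<close> meeting \<open>I\<close> is its core
  \<open>S \<inter> I\<close> (a subtree of the internal vertices) plus some of the leaves hanging on that core;
  exchanging the chosen leaves for the unchosen ones is an involution, so on average such a
  subtree contains at most half of the \<open>\<ell>\<close> leaves and has order at most \<open>|I| + \<ell>/2\<close>.
  Counting degrees gives \<open>\<ell> \<ge> |I| + 2\<close>, whence \<open>|I| + \<ell>/2 \<le> (3n - 2)/4\<close>; the single
  leaves have order \<open>1\<close>, which is strictly smaller.\<close>

definition induced_adj :: "('a \<Rightarrow> 'a \<Rightarrow> bool) \<Rightarrow> 'a set \<Rightarrow> ('a \<times> 'a) set" where
  "induced_adj E S = {(u, v). u \<in> S \<and> v \<in> S \<and> E u v}"

lemma induces_connected_iff: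
  "induces_connected E S \<longleftrightarrow> S \<noteq> {} \<and> (\<forall>x\<in>S. \<forall>y\<in>S. (x, y) \<in> (induced_adj E S)\<^sup>*)"
  unfolding induces_connected_def induced_adj_def ..

lemma induced_adj_mono: "A \<subseteq> B \<Longrightarrow> induced_adj E A \<subseteq> induced_adj E B"
  unfolding induced_adj_def by auto

lemma induced_adj_first_step:
  assumes "(x, y) \<in> (induced_adj E S)\<^sup>*" "x \<noteq> y"
  shows "x \<in> S \<and> (\<exists>z\<in>S. E x z)"
  using assms by (cases rule: converse_rtranclE) (auto simp: induced_adj_def)

lemma induces_connected_extend:
  assumes A: "induces_connected E A" and "A \<subseteq> B"
    and linked: "\<And>b. b \<in> B \<Longrightarrow> \<exists>a\<in>A. (a, b) \<in> (induced_adj E B)\<^sup>* \<and> (b, a) \<in> (induced_adj E B)\<^sup>*"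
  shows "induces_connected E B"
  unfolding induces_connected_iff
proof (intro conjI ballI)
  show "B \<noteq> {}" using A \<open>A \<subseteq> B\<close> by (auto simp: induces_connected_iff)
next
  fix x y assume "x \<in> B" "y \<in> B"
  then obtain a a' where a: "a \<in> A" "(x, a) \<in> (induced_adj E B)\<^sup>*"
    and a': "a' \<in> A" "(a', y) \<in> (induced_adj E B)\<^sup>*"
    using linked by blast
  have "(a, a') \<in> (induced_adj E A)\<^sup>*" using A a(1) a'(1) by (auto simp: induces_connected_iff)
  then have "(a, a') \<in> (induced_adj E B)\<^sup>*"
    using rtrancl_mono[OF induced_adj_mono[OF \<open>A \<subseteq> B\<close>]] by blast
  then show "(x, y) \<in> (induced_adj E B)\<^sup>*" using a a' by (meson rtrancl_trans)
qed

lemma sum_degree_eq_twice_card_edges: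
  assumes "simple_graph V E"
  shows "(\<Sum>v\<in>V. degree V E v) = 2 * card (edges V E)"
proof -
  have finV: "finite V" and E: "\<And>u v. E u v \<Longrightarrow> u \<in> V \<and> v \<in> V \<and> u \<noteq> v \<and> E v u"
    using assms unfolding simple_graph_def by blast+
  define D where "D = Sigma V (\<lambda>v. {u\<in>V. E v u})"
  define ends where "ends = (\<lambda>(u::'a, v::'a). {u, v})"
  have finD: "finite D" unfolding D_def using finV by auto
  have finE: "finite (edges V E)"
    using finite_subset[of "edges V E" "Pow V"] finV unfolding edges_def by auto
  have ends_D: "ends ` D \<subseteq> edges V E" unfolding ends_def D_def edges_def by auto
  have "(\<Sum>v\<in>V. degree V E v) = card D"
    unfolding D_def degree_def using finV by simp
  also have "\<dots> = (\<Sum>e\<in>edges V E. card {d \<in> D. ends d = e})"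
    using sum.group[OF finD finE ends_D, of "\<lambda>_. 1::nat"] by simp
  also have "\<dots> = (\<Sum>e\<in>edges V E. 2)"
  proof (rule sum.cong)
    fix e assume "e \<in> edges V E"
    then obtain u v where uv: "e = {u, v}" "u \<in> V" "v \<in> V" "E u v" unfolding edges_def by blast
    then have "{d \<in> D. ends d = e} = {(u, v), (v, u)}" and "u \<noteq> v"
      unfolding D_def ends_def using E[OF uv(4)] by (auto simp: doubleton_eq_iff)
    then show "card {d \<in> D. ends d = e} = 2" by simp
  qed simp
  finally show ?thesis by simp
qed

lemma sum_le_half_bound_by_involution:
  fixes g :: "'a \<Rightarrow> nat"
  assumes "finite X" and f: "\<And>x. x \<in> X \<Longrightarrow> f x \<in> X" "\<And>x. x \<in> X \<Longrightarrow> f (f x) = x"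
    and bound: "\<And>x. x \<in> X \<Longrightarrow> g x + g (f x) \<le> c"
  shows "2 * (\<Sum>x\<in>X. g x) \<le> c * card X"
proof -
  have "bij_betw f X X" by (rule bij_betw_byWitness[where f' = f]) (use f in auto)
  then have "(\<Sum>x\<in>X. g (f x)) = (\<Sum>x\<in>X. g x)" by (rule sum.reindex_bij_betw)
  then have "2 * (\<Sum>x\<in>X. g x) = (\<Sum>x\<in>X. g x + g (f x))" by (simp add: sum.distrib)
  also have "\<dots> \<le> (\<Sum>x\<in>X. c)" by (rule sum_mono) (rule bound)
  finally show ?thesis by (simp add: mult.commute)
qed

locale T3_tree =
  fixes V :: "'a set" and E :: "'a \<Rightarrow> 'a \<Rightarrow> bool"
  assumes T3: "in_T3 V E"
begin

definition leaves :: "'a set" where "leaves = {v\<in>V. degree V E v \<le> 1}"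
definition internals :: "'a set" where "internals = {v\<in>V. 2 \<le> degree V E v}"

lemma simple: "simple_graph V E"
  using T3 unfolding in_T3_def is_tree_def by blast

lemma finite_V: "finite V"
  using simple unfolding simple_graph_def by blast

lemma edge: assumes "E u v" shows "u \<in> V" "v \<in> V" "u \<noteq> v" "E v u"
  using simple assms unfolding simple_graph_def by blast+

lemma connected: "x \<in> V \<Longrightarrow> y \<in> V \<Longrightarrow> (x, y) \<in> (induced_adj E V)\<^sup>*"
  using T3 unfolding in_T3_def is_tree_def induces_connected_iff by blast

lemma V_eq: "V = internals \<union> leaves" and internals_leaves_disjoint: "internals \<inter> leaves = {}"
  unfolding internals_def leaves_def by auto

lemma finite_leaves: "finite leaves" and finite_internals: "finite internals"
  using finite_V unfolding leaves_def internals_def by auto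

lemma card_V: "card V = card internals + card leaves"
  using card_Un_disjoint[OF finite_internals finite_leaves internals_leaves_disjoint] V_eq by simp

lemma internals_nonempty: "internals \<noteq> {}"
  using T3 unfolding in_T3_def internals_def by blast

lemma leaf_neighbour_unique:
  assumes "v \<in> leaves" "E v a" "E v b" shows "a = b"
proof -
  have "card {u\<in>V. E v u} \<le> Suc 0" using assms(1) unfolding leaves_def degree_def by simp
  moreover have "a \<in> {u\<in>V. E v u}" "b \<in> {u\<in>V. E v u}" using assms edge by auto
  ultimately show ?thesis using card_le_Suc0_iff_eq[of "{u\<in>V. E v u}"] finite_V by auto
qed

text \<open>Two adjacent leaves would form the whole tree, which has an internal vertex.\<close>
lemma leaves_not_adjacent:
  assumes "E u v" "u \<in> leaves" "v \<in> leaves" shows False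
proof -
  obtain w where w: "w \<in> internals" using internals_nonempty by blast
  have "(u, w) \<in> (induced_adj E V)\<^sup>*" using connected edge(1)[OF assms(1)] w V_eq by blast
  then have "w \<in> {u, v}"
  proof (induction rule: rtrancl_induct)
    case (step y z)
    then have "E y z" "y = u \<or> y = v" by (auto simp: induced_adj_def)
    then show ?case
      using leaf_neighbour_unique assms edge(4)[OF assms(1)] by blast
  qed simp
  then show False using w assms internals_leaves_disjoint by auto
qed

lemma degree_pos: assumes "v \<in> V" shows "1 \<le> degree V E v"
proof -
  obtain w where w: "w \<in> internals" using internals_nonempty by blast
  have "\<exists>u. u \<in> V \<and> E v u"
  proof (cases "v = w")
    case True
    then have "card {u\<in>V. E v u} \<noteq> 0" using w unfolding internals_def degree_def by auto
    then show ?thesis by (metis (no_types, lifting) card.empty empty_Collect_eq)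
  next
    case False
    then show ?thesis
      using induced_adj_first_step[OF connected[OF assms, of w]] w V_eq by blast
  qed
  then show ?thesis unfolding degree_def using finite_V by (auto simp: Suc_le_eq card_gt_0_iff)
qed

lemma card_internals_add_two_le_card_leaves: "card internals + 2 \<le> card leaves"
proof -
  have "(\<Sum>v\<in>V. degree V E v) = (\<Sum>v\<in>internals. degree V E v) + (\<Sum>v\<in>leaves. degree V E v)"
    using sum.union_disjoint[OF finite_internals finite_leaves internals_leaves_disjoint] V_eq
    by simp
  moreover have "(\<Sum>v\<in>internals. degree V E v) \<ge> 3 * card internals"
    using sum_mono[of internals "\<lambda>_. 3" "degree V E"] T3
    unfolding internals_def in_T3_def by auto
  moreover have "(\<Sum>v\<in>leaves. degree V E v) \<ge> card leaves"
    using sum_mono[of leaves "\<lambda>_. 1" "degree V E"] degree_pos unfolding leaves_def by auto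
  moreover have "card (edges V E) + 1 = card V"
    using T3 unfolding in_T3_def is_tree_def by blast
  ultimately show ?thesis using sum_degree_eq_twice_card_edges[OF simple] card_V by simp
qed

lemma subtree_subset: "S \<in> subtrees V E \<Longrightarrow> S \<subseteq> V"
  unfolding subtrees_def by blast

lemma subtree_connected:
  "S \<in> subtrees V E \<Longrightarrow> x \<in> S \<Longrightarrow> y \<in> S \<Longrightarrow> (x, y) \<in> (induced_adj E S)\<^sup>*"
  unfolding subtrees_def induces_connected_iff by blast

lemma finite_subtrees: "finite (subtrees V E)"
  using finite_subset[of "subtrees V E" "Pow V"] finite_V unfolding subtrees_def by auto

text \<open>A walk inside \<open>S\<close> starting at an internal vertex \<open>x\<close> only ever leaves the internal
  vertices for a single step onto a leaf, which must then step back to the same vertex.\<close>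
lemma walk_from_internal:
  assumes "x \<in> S \<inter> internals" and "(x, y) \<in> (induced_adj E S)\<^sup>*"
  shows "\<exists>z\<in>S \<inter> internals. (x, z) \<in> (induced_adj E (S \<inter> internals))\<^sup>* \<and> (z = y \<or> E z y)"
  using assms(2)
proof (induction rule: rtrancl_induct)
  case base
  then show ?case using assms(1) by blast
next
  case (step y y')
  then obtain z where z: "z \<in> S \<inter> internals" "(x, z) \<in> (induced_adj E (S \<inter> internals))\<^sup>*"
    "z = y \<or> E z y" by blast
  from step.hyps(2) have yy': "E y y'" "y \<in> S" "y' \<in> S" by (auto simp: induced_adj_def)
  consider "y \<in> internals" "(x, y) \<in> (induced_adj E (S \<inter> internals))\<^sup>*" | "y \<in> leaves" "E z y"
  proof (cases "z = y \<or> y \<in> internals")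
    case True
    then have "(x, y) \<in> (induced_adj E (S \<inter> internals))\<^sup>*"
      using z yy' by (auto simp: induced_adj_def intro: rtrancl_into_rtrancl)
    then show ?thesis using that True z(1) by blast
  next
    case False
    then show ?thesis using that z(3) edge(1)[OF yy'(1)] V_eq by blast
  qed
  then show ?case
  proof cases
    case 1
    show ?thesis
    proof (cases "y' \<in> internals")
      case True
      then have "(y, y') \<in> induced_adj E (S \<inter> internals)" using 1 yy' by (auto simp: induced_adj_def)
      then show ?thesis using 1 True yy' by (meson IntI rtrancl_into_rtrancl)
    qed (use 1 yy' in blast)
  next
    case 2
    then have "z = y'" using leaf_neighbour_unique edge(4) yy'(1) by blast
    then show ?thesis using z by blast
  qed
qed

lemma subtree_internals_connected:
  assumes S: "S \<in> subtrees V E" and "S \<inter> internals \<noteq> {}"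
  shows "induces_connected E (S \<inter> internals)"
  unfolding induces_connected_iff
proof (intro conjI ballI)
  fix x y assume x: "x \<in> S \<inter> internals" and y: "y \<in> S \<inter> internals"
  then obtain z where z: "z \<in> S \<inter> internals" "(x, z) \<in> (induced_adj E (S \<inter> internals))\<^sup>*"
    "z = y \<or> E z y"
    using walk_from_internal subtree_connected[OF S] by blast
  then show "(x, y) \<in> (induced_adj E (S \<inter> internals))\<^sup>*"
    using y by (auto simp: induced_adj_def intro: rtrancl_into_rtrancl)
qed fact

lemma subtree_leaf_attached:
  assumes S: "S \<in> subtrees V E" and x: "x \<in> S \<inter> leaves" and y: "y \<in> S \<inter> internals"
  shows "\<exists>z\<in>S \<inter> internals. E z x"
proof -
  have "x \<noteq> y" using x y internals_leaves_disjoint by auto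
  then obtain z where z: "z \<in> S" "E x z"
    using induced_adj_first_step[OF subtree_connected[OF S]] x y by blast
  then have "z \<in> internals" using leaves_not_adjacent x edge(2) V_eq by blast
  then show ?thesis using z edge(4) by blast
qed

lemma subtrees_without_internals: "{S \<in> subtrees V E. S \<inter> internals = {}} = (\<lambda>v. {v}) ` leaves"
proof (intro equalityI subsetI)
  fix S assume "S \<in> {S \<in> subtrees V E. S \<inter> internals = {}}"
  then have S: "S \<in> subtrees V E" "S \<subseteq> leaves" "S \<noteq> {}"
    using subtree_subset[of S] V_eq unfolding subtrees_def induces_connected_iff by blast+
  have "x = y" if xy: "x \<in> S" "y \<in> S" for x y
  proof (rule ccontr)
    assume "x \<noteq> y"
    then obtain z where "z \<in> S" "E x z"
      using induced_adj_first_step[OF subtree_connected[OF S(1) xy]] by blast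
    then show False using leaves_not_adjacent S(2) xy by blast
  qed
  then show "S \<in> (\<lambda>v. {v}) ` leaves" using S(2,3) by blast
next
  fix S assume "S \<in> (\<lambda>v. {v}) ` leaves"
  then obtain v where v: "S = {v}" "v \<in> leaves" by blast
  then have "S \<in> subtrees V E" unfolding subtrees_def induces_connected_iff leaves_def by auto
  then show "S \<in> {S \<in> subtrees V E. S \<inter> internals = {}}"
    using v internals_leaves_disjoint by blast
qed

definition core_subtrees :: "'a set set" where
  "core_subtrees = {S \<in> subtrees V E. S \<inter> internals \<noteq> {}}"

definition flip_leaves :: "'a set \<Rightarrow> 'a set" where
  "flip_leaves S = (S \<inter> internals) \<union> {x \<in> leaves - S. \<exists>z\<in>S \<inter> internals. E z x}"

lemma finite_core_subtrees: "finite core_subtrees"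
  using finite_subtrees unfolding core_subtrees_def by simp

lemma internals_flip_leaves: "flip_leaves S \<inter> internals = S \<inter> internals"
  unfolding flip_leaves_def using internals_leaves_disjoint by auto

lemma flip_leaves_core_subtree:
  assumes S: "S \<in> core_subtrees" shows "flip_leaves S \<in> core_subtrees"
proof -
  have S': "S \<in> subtrees V E" "S \<inter> internals \<noteq> {}" using S unfolding core_subtrees_def by auto
  have "induces_connected E (flip_leaves S)"
  proof (rule induces_connected_extend[OF subtree_internals_connected[OF S']])
    show "S \<inter> internals \<subseteq> flip_leaves S" unfolding flip_leaves_def by auto
  next
    fix b assume b: "b \<in> flip_leaves S"
    show "\<exists>a\<in>S \<inter> internals. (a, b) \<in> (induced_adj E (flip_leaves S))\<^sup>* \<and>
                                (b, a) \<in> (induced_adj E (flip_leaves S))\<^sup>*"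
    proof (cases "b \<in> S \<inter> internals")
      case False
      then obtain z where z: "z \<in> S \<inter> internals" "E z b" using b unfolding flip_leaves_def by blast
      then have "(z, b) \<in> induced_adj E (flip_leaves S)" "(b, z) \<in> induced_adj E (flip_leaves S)"
        using b edge(4)[OF z(2)] unfolding induced_adj_def flip_leaves_def by auto
      then show ?thesis using z by blast
    qed blast
  qed
  moreover have "flip_leaves S \<subseteq> V"
    using subtree_subset[OF S'(1)] V_eq unfolding flip_leaves_def by auto
  ultimately show ?thesis
    using S'(2) internals_flip_leaves unfolding core_subtrees_def subtrees_def by auto
qed

lemma flip_leaves_flip_leaves:
  assumes S: "S \<in> core_subtrees" shows "flip_leaves (flip_leaves S) = S"
proof -
  have S': "S \<in> subtrees V E" "S \<inter> internals \<noteq> {}" using S unfolding core_subtrees_def by auto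
  have "\<And>x. x \<in> S \<inter> leaves \<Longrightarrow> \<exists>z\<in>S \<inter> internals. E z x"
    using subtree_leaf_attached[OF S'(1)] S'(2) by blast
  then show ?thesis
    using subtree_subset[OF S'(1)] V_eq internals_leaves_disjoint
    unfolding flip_leaves_def[of "flip_leaves S"] internals_flip_leaves
    unfolding flip_leaves_def by blast
qed

lemma card_leaves_flip_leaves: "card (S \<inter> leaves) + card (flip_leaves S \<inter> leaves) \<le> card leaves"
proof -
  have "(S \<inter> leaves) \<union> (flip_leaves S \<inter> leaves) \<subseteq> leaves"
    "(S \<inter> leaves) \<inter> (flip_leaves S \<inter> leaves) = {}"
    unfolding flip_leaves_def using internals_leaves_disjoint by auto
  then show ?thesis
    using card_mono[OF finite_leaves] card_Un_disjoint finite_leaves by (metis finite_Int)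
qed

lemma card_subtree_split:
  assumes "S \<in> subtrees V E"
  shows "card S = card (S \<inter> internals) + card (S \<inter> leaves)"
proof -
  have "S = (S \<inter> internals) \<union> (S \<inter> leaves)" using subtree_subset[OF assms] V_eq by blast
  then show ?thesis
    using card_Un_disjoint[of "S \<inter> internals" "S \<inter> leaves"] finite_internals finite_leaves
      internals_leaves_disjoint by (metis finite_Int inf_assoc inf_bot_right inf_left_commute)
qed

lemma sum_card_core_subtrees_le:
  "4 * (\<Sum>S\<in>core_subtrees. card S) + 2 * card core_subtrees \<le> 3 * card V * card core_subtrees"
proof -
  have internal_part: "(\<Sum>S\<in>core_subtrees. card (S \<inter> internals)) \<le> card internals * card core_subtrees"
    using sum_mono[of core_subtrees "\<lambda>S. card (S \<inter> internals)" "\<lambda>_. card internals"]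
      card_mono[OF finite_internals] by (simp add: mult.commute)
  have leaf_part: "2 * (\<Sum>S\<in>core_subtrees. card (S \<inter> leaves)) \<le> card leaves * card core_subtrees"
    by (intro sum_le_half_bound_by_involution[where f = flip_leaves])
      (simp_all add: finite_core_subtrees flip_leaves_core_subtree flip_leaves_flip_leaves
        card_leaves_flip_leaves)
  have "(\<Sum>S\<in>core_subtrees. card S)
        = (\<Sum>S\<in>core_subtrees. card (S \<inter> internals)) + (\<Sum>S\<in>core_subtrees. card (S \<inter> leaves))"
    using card_subtree_split unfolding core_subtrees_def by (simp add: sum.distrib)
  moreover have "(4 * card internals + 2 * card leaves + 2) * card core_subtrees
                 \<le> 3 * card V * card core_subtrees"
    using card_internals_add_two_le_card_leaves card_V by (intro mult_right_mono) auto
  ultimately show ?thesis using internal_part leaf_part by (simp add: algebra_simps)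
qed

lemma mu_less: "mu V E < (3 * real (card V) - 2) / 4"
proof -
  define X where "X = core_subtrees"
  define Y where "Y = {S \<in> subtrees V E. S \<inter> internals = {}}"
  have XY: "subtrees V E = X \<union> Y" "X \<inter> Y = {}" "finite X" "finite Y"
    unfolding X_def Y_def core_subtrees_def using finite_subtrees by auto
  have Y: "(\<Sum>S\<in>Y. card S) = card Y" "card Y = card leaves"
    unfolding Y_def subtrees_without_internals
    by (simp_all add: sum.reindex card_image finite_leaves)
  have "card internals > 0" using internals_nonempty finite_internals by (simp add: card_gt_0_iff)
  then have "card Y > 0" and "4 < 3 * real (card V) - 2"
    using Y(2) card_internals_add_two_le_card_leaves card_V by auto
  then have "4 * real (card Y) < (3 * real (card V) - 2) * real (card Y)" by simp
  then have "4 * real (\<Sum>S\<in>X. card S) + 4 * real (card Y)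
             < (3 * real (card V) - 2) * (real (card X) + real (card Y))"
    using sum_card_core_subtrees_le[folded X_def, THEN of_nat_mono[where 'a = real]]
    by (simp add: algebra_simps)
  moreover have "(\<Sum>S\<in>subtrees V E. real (card S)) = real (\<Sum>S\<in>X. card S) + real (card Y)"
    and card_subtrees: "card (subtrees V E) = card X + card Y"
    using XY Y(1) by (simp_all add: sum.union_disjoint card_Un_disjoint flip: of_nat_sum)
  ultimately have "(\<Sum>S\<in>subtrees V E. real (card S))
                  < (3 * real (card V) - 2) / 4 * real (card (subtrees V E))"
    by (simp add: algebra_simps)
  then show ?thesis
    unfolding mu_def using \<open>card Y > 0\<close> card_subtrees by (simp add: pos_divide_less_eq)
qed

end

theorem mainTheorem3:
  fixes V :: "'a set" and E :: "'a \<Rightarrow> 'a \<Rightarrow> bool" and n :: nat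
  assumes "in_T3 V E"
    and "card V = n"
  shows "mu V E < (3 * real n - 2) / 4"
proof -
  interpret T3_tree V E by unfold_locales fact
  show ?thesis using mu_less assms(2) by simp
qed

end
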